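(* Let $$\mathcal L^H=\sum_{k,\alpha}\rho^\alpha_k\Big\langle\mathcal O^{(k)}_\alpha\exp\Big(\sum_{m,\beta}\lambda^\beta_m\mathcal O^{(m)}_\beta\Big)\Big\rangle_0\in\mathbb C[[\partial_z^m\lambda^\alpha_k,\partial_z^m\rho^\alpha_k]].$$ Then $\oint_C\mathscr J^{(1)}_{\mathcal L^H}$ satisfies the Maurer--Cartan equation in $(\mathrm{Obs}^{\oint_C},\delta,\{-,-\}_C)$: $$\delta\oint_C\mathscr J^{(1)}_{\mathcal L^H}+\tfrac12\Big\{\oint_C\mathscr J^{(1)}_{\mathcal L^H},\oint_C\mathscr J^{(1)}_{\mathcal L^H}\Big\}_C=0.$$
   Context: Genus zero data: $H$ finite-dimensional purely even complex vector space with basis $\{\mathcal O_\alpha\}$, distinguished $P=\mathcal O_1$, $\mathcal O^{(k)}_\alpha=t^k\mathcal O_\alpha$; symmetric multilinear genus zero correlators $\langle\mathcal O^{(k_1)}_{\alpha_1}\cdots\mathcal O^{(k_n)}_{\alpha_n}\rangle_0\in\mathbb C$ vanishing for $n<3$, with $g_{\alpha\beta}=\langle\mathcal O_\alpha\mathcal O_\beta P\rangle_0$ nondegenerate (inverse $g^{\alpha\beta}$, used to raise indices), satisfying the genus zero topological recursion relation $\langle\langle\mathcal O^{(i+1)}_\alpha\mathcal O^{(j)}_\beta\mathcal O^{(k)}_\gamma\rangle\rangle_0=\sum_\sigma\langle\langle\mathcal O^{(i)}_\alpha\mathcal O^{(0)\sigma}\rangle\rangle_0\langle\langle\mathcal O^{(0)}_\sigma\mathcal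 O^{(j)}_\beta\mathcal O^{(k)}_\gamma\rangle\rangle_0$, where $\langle\langle\cdots\rangle\rangle_0(\mathbf b)=\langle\cdots e^{\sum b^\alpha_k\mathcal O^{(k)}_\alpha}\rangle_0$. In $\mathcal L^H$ the exponential is expanded and the correlator applied multilinearly, producing a formal power series in the symbols. Setting on $\mathbb C^\times=\mathbb C/(z\sim z+1)$ with form $dz$: fields $\mathcal E^H=(\mathrm{PV}(\mathbb C^\times)\otimes H)[[t]]$, $\mu=\sum(\lambda^\alpha_k\otimes\mathcal O_\alpha t^k+\rho^\alpha_k\partial_z\otimes\mathcal O_\alpha t^k)$, $\lambda^\alpha_k,\rho^\alpha_k\in\Omega^{0,\bullet}(\mathbb C^\times)$, $t$ of degree 2, $\mathrm{PV}^{i,j}$ in degree $i+j$. Trace $\mathrm{Tr}(\mu)=\int(\mu\vdash dz)\wedge dz$; BV kernel $K_0=\sum_\alpha(\mathcal O^\alpha\otimes\mathcal O_\alpha)\partial_z\delta(z-w)(d\bar z-d\bar w)$. $\mathbb C[[\partial_z^m\lambda^\alpha_k,\partial_z^m\rho^\alpha_k]]$: formal power series in even $\partial_z^m\lambda^\alpha_k$ and odd $\partial_z^m\rho^\alpha_k$, with derivation $\partial_z$; differential $\delta$: odd derivation commuting with $\partial_z$, $\delta\lambda^\alpha_k=\partial_z\rho^\alpha_{k-1}$ ($k\ge1$), $\delta\lambda^\alpha_0=0$, $\delta\rho^\alpha_k=0$. $\mathscr J_{\mathcal L}=dz\,\mathcal L(\partial_z^m\lambda^\alpha_k,\partial_z^m\rho^\alpha_k)$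 (an $\Omega^{\bullet,\bullet}(\mathbb C^\times)$-valued function on fields), with 1-form and 2-form parts $\mathscr J^{(1)}_{\mathcal L},\mathscr J^{(2)}_{\mathcal L}$; $C=\{z\in[0,1]\}$. $\mathrm{Obs}^{\oint_C}=\{\oint_C\mathscr J^{(1)}_{\mathcal L}\}$ with differential $\oint_C\mathscr J^{(1)}_{\mathcal L}\mapsto\oint_C\mathscr J^{(1)}_{\delta\mathcal L}$ and bracket $\{\oint_C\mathscr J^{(1)}_{\mathcal L_1},\oint_C\mathscr J^{(1)}_{\mathcal L_2}\}_C:=\{\int_{\mathbb C^\times}\mathscr J^{(2)}_{\mathcal L_1},\oint_C\mathscr J^{(1)}_{\mathcal L_2}\}_{BV}$, where $\{S,\mathcal O\}_{BV}$ is the derivative of the observable $\mathcal O$ along the field transformation obtained by contracting $K_0$ with the functional derivative of the local functional $S$; concretely $\{\oint_C\mathscr J^{(1)}_{\mathcal L_1},\oint_C\mathscr J^{(1)}_{\mathcal L_2}\}_C=\oint_C\mathscr J^{(1)}_{[\mathcal L_1,\mathcal L_2]}$ with $[\mathcal L_1,\mathcal L_2]=\sum_{\alpha,\beta,k,m}\{(-\partial_z)^k\frac{\partial\mathcal L_1}{\partial(\partial_z^k\lambda^\alpha_0)}\}g^{\alpha\beta}\partial_z\{(-\partial_z)^m\frac{\partial\mathcal L_2}{\partial(\partial_z^m\lambda^\beta_0)}\}$. *)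

theory Defs
  imports "HOL-Analysis.Analysis" "HOL-Library.Multiset"
begin

text \<open>Basis of H indexed by a finite (linearly ordered) type 'i; an insertion
  O^{(k)}_alpha is the pair (alpha,k). A symmetric multilinear correlator is
  determined by its values on multisets of basis insertions.\<close>

type_synonym 'i corr = "('i \<times> nat) multiset \<Rightarrow> complex"

definition mfact :: "'a multiset \<Rightarrow> nat" where
  "mfact M = (\<Prod>x\<in>set_mset M. fact (count M x))"

text \<open>Coefficient of b^M in the formal power series <<X>>_0(b) = <X exp(sum b O)>_0.\<close>
definition dcorr :: "'i corr \<Rightarrow> ('i \<times> nat) multiset \<Rightarrow> ('i \<times> nat) multiset \<Rightarrow> complex" where
  "dcorr c X M = c (X + M) / of_nat (mfact M)"

definition gmet :: "'i corr \<Rightarrow> 'i \<Rightarrow> 'i \<Rightarrow> 'i \<Rightarrow> complex" where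
  "gmet c p a b = c {#(a,0), (b,0), (p,0)#}"

definition gmat :: "'i corr \<Rightarrow> 'i \<Rightarrow> complex ^ 'i ^ 'i" where
  "gmat c p = (\<chi> a b. gmet c p a b)"

definition ginv :: "'i::finite corr \<Rightarrow> 'i \<Rightarrow> 'i \<Rightarrow> 'i \<Rightarrow> complex" where
  "ginv c p a b = matrix_inv (gmat c p) $ a $ b"

text \<open>A variable (m,(a,k)) stands for d_z^m lambda^a_k (even) or d_z^m rho^a_k (odd).
  A monomial is (E,O): a multiset E of even variables and a finite set O of odd
  variables, representing x^E * (product of O in increasing order).\<close>

type_synonym 'i var = "nat \<times> 'i \<times> nat"
type_synonym 'i mono = "'i var multiset \<times> 'i var set"
type_synonym 'i ser = "'i mono \<Rightarrow> complex"

definition vless :: "'i::linorder var \<Rightarrow> 'i var \<Rightarrow> bool" where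
  "vless v w = (fst v < fst w \<or> (fst v = fst w \<and>
     (fst (snd v) < fst (snd w) \<or> (fst (snd v) = fst (snd w) \<and> snd (snd v) < snd (snd w)))))"

text \<open>Sign with x_A * x_B = ksign A B * x_(A union B) for disjoint finite A, B.\<close>
definition ksign :: "'i::linorder var set \<Rightarrow> 'i var set \<Rightarrow> complex" where
  "ksign A B = (-1) ^ card {(a,b). a \<in> A \<and> b \<in> B \<and> vless b a}"

definition smul :: "'i::linorder ser \<Rightarrow> 'i ser \<Rightarrow> 'i ser" where
  "smul f g N = (\<Sum>E1\<in>{E1. E1 \<subseteq># fst N}. \<Sum>O1\<in>Pow (snd N).
      ksign O1 (snd N - O1) * f (E1, O1) * g (fst N - E1, snd N - O1))"

definition gen_e :: "'i var \<Rightarrow> 'i ser" where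
  "gen_e w N = (if N = ({#w#}, {}) then 1 else 0)"

definition gen_o :: "'i var \<Rightarrow> 'i ser" where
  "gen_o w N = (if N = ({#}, {w}) then 1 else 0)"

text \<open>Partial derivative by an even variable, and left partial derivative by an odd one.\<close>
definition pe :: "'i var \<Rightarrow> 'i ser \<Rightarrow> 'i ser" where
  "pe v f N = of_nat (count (fst N) v + 1) * f (fst N + {#v#}, snd N)"

definition po :: "'i::linorder var \<Rightarrow> 'i ser \<Rightarrow> 'i ser" where
  "po v f N = (if v \<in> snd N then 0 else ksign {v} (snd N) * f (fst N, insert v (snd N)))"

definition sh :: "'i var \<Rightarrow> 'i var" where
  "sh v = (Suc (fst v), snd v)"

text \<open>The even derivation d_z (d_z(d^m x) = d^{m+1} x), D f = sum_v D(v) * d f/d v.\<close>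
definition dz :: "'i::linorder ser \<Rightarrow> 'i ser" where
  "dz f N = (\<Sum>\<^sub>\<infinity>v. smul (gen_e (sh v)) (pe v f) N + smul (gen_o (sh v)) (po v f) N)"

text \<open>The odd derivation delta: delta (d^m lambda^a_k) = d^{m+1} rho^a_{k-1} (k>=1),
  delta lambda^a_0 = 0, delta rho = 0.\<close>
definition delta :: "'i::linorder ser \<Rightarrow> 'i ser" where
  "delta f N = (\<Sum>\<^sub>\<infinity>v. (case v of (m,a,k) \<Rightarrow>
      if 1 \<le> k then smul (gen_o (Suc m, a, k - 1)) (pe v f) N else 0))"

definition vd :: "'i \<Rightarrow> 'i::linorder ser \<Rightarrow> 'i ser" where
  "vd a f N = (\<Sum>k. (-1) ^ k * (dz ^^ k) (pe (k, a, 0) f) N)"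

definition br :: "'i::{finite,linorder} corr \<Rightarrow> 'i \<Rightarrow> 'i ser \<Rightarrow> 'i ser \<Rightarrow> 'i ser" where
  "br c p f g N = (\<Sum>a\<in>UNIV. \<Sum>b\<in>UNIV. ginv c p a b * smul (vd a f) (dz (vd b g)) N)"

text \<open>L^H = sum_{k,a} rho^a_k <O^{(k)}_a exp(sum lambda^b_m O^{(m)}_b)>_0.\<close>
definition LH :: "'i corr \<Rightarrow> 'i ser" where
  "LH c N = (if (\<forall>v\<in>#fst N. fst v = 0) \<and> card (snd N) = 1 \<and> (\<forall>v\<in>snd N. fst v = 0)
     then dcorr c {#snd (the_elem (snd N))#} (image_mset snd (fst N)) else 0)"

end

theory Submission
  imports Defs
begin

(* The Maurer-Cartan expression delta L^H + 1/2 [L^H, L^H] is a total z-derivative d_z N,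
   with N = 1/2 sum rho_x rho_y <<O_x^+ O_y>>_0 and O_x^+ the next descendant of O_x; hence its
   integral over the closed contour C vanishes. Comparing coefficients, only the monomials
   lambda^M rho_u (d_z rho_w) and lambda^M (d_z lambda_z) rho_u rho_w matter. On the latter,
   delta L^H does not contribute and the bracket is the TRR expansion of <<O_u^+ O_w O_z>>_0.
   On the former, delta L^H gives -<<O_u O_w^+>>_0 and the bracket is
   <<O_u O_a>>_0 g^ab <<O_b O_w>>_0 = <<O_u^+ O_w>>_0 + <<O_u O_w^+>>_0. *)

section \<open>Convolution and derivation of multiset-indexed coefficients\<close>

lemma finite_submultisets: "finite {N. N \<subseteq># M}"
proof (rule finite_subset)
  show "{N. N \<subseteq># M} \<subseteq> (\<Union>n\<le>size M. multisets_of_size (set_mset M) n)"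
    by (auto simp: multisets_of_size_def dest: mset_subset_eqD size_mset_mono)
qed auto

lemma add_mset_diff_submultiset: "N \<subseteq># M \<Longrightarrow> add_mset z M - N = add_mset z (M - N)"
  unfolding subseteq_mset_def multiset_eq_iff by (auto simp: Suc_diff_le)

(* Coefficientwise product and partial derivative d/db_z of formal power series
   sum_M f M * b^M, indexed by multisets M of variables b. *)
definition mconv :: "('a multiset \<Rightarrow> 'b) \<Rightarrow> ('a multiset \<Rightarrow> 'b) \<Rightarrow> 'a multiset \<Rightarrow> 'b::comm_semiring_1" where
  "mconv f g M = (\<Sum>M1 | M1 \<subseteq># M. f M1 * g (M - M1))"

definition mderiv :: "'a \<Rightarrow> ('a multiset \<Rightarrow> 'b) \<Rightarrow> 'a multiset \<Rightarrow> 'b::semiring_1" where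
  "mderiv z f M = of_nat (count M z + 1) * f (add_mset z M)"

lemma mderiv_add: "mderiv z (\<lambda>M. f M + g M) M = mderiv z f M + mderiv z g M"
  by (simp add: mderiv_def distrib_left)

lemma mderiv_cmult:
  fixes f :: "'a multiset \<Rightarrow> 'b::comm_semiring_1"
  shows "mderiv z (\<lambda>M. a * f M) M = a * mderiv z f M"
  by (simp add: mderiv_def mult_ac)

lemma mderiv_diff:
  fixes f g :: "'a multiset \<Rightarrow> 'b::ring_1"
  shows "mderiv z (\<lambda>M. f M - g M) M = mderiv z f M - mderiv z g M"
  by (simp add: mderiv_def right_diff_distrib)

lemma mconv_commute: "mconv f g M = mconv g f M"
  unfolding mconv_def
  by (rule sum.reindex_bij_witness[where i="\<lambda>M1. M - M1" and j="\<lambda>M1. M - M1"])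
     (auto simp: subset_mset.diff_diff_right mult.commute)

lemma mconv_empty: "mconv f g {#} = f {#} * g {#}"
  by (simp add: mconv_def)

lemma mconv_mderiv_left:
  "mconv (mderiv z f) g M
     = (\<Sum>N | N \<subseteq># add_mset z M. of_nat (count N z) * f N * g (add_mset z M - N))"
proof -
  let ?A = "add_mset z M"
  have "mconv (mderiv z f) g M
      = (\<Sum>N\<in>add_mset z ` {M1. M1 \<subseteq># M}. of_nat (count N z) * f N * g (?A - N))"
    unfolding mconv_def mderiv_def by (subst sum.reindex) (simp_all add: inj_on_def mult_ac)
  also have "\<dots> = (\<Sum>N | N \<subseteq># ?A. of_nat (count N z) * f N * g (?A - N))"
  proof (rule sum.mono_neutral_left)
    have "z \<notin># N" if "N \<subseteq># ?A" "N \<notin> add_mset z ` {M1. M1 \<subseteq># M}" for N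
      using that by (metis (no_types) image_eqI mem_Collect_eq mset_subset_eq_add_mset_cancel
          multi_member_split)
    then show "\<forall>N\<in>{N. N \<subseteq># ?A} - add_mset z ` {M1. M1 \<subseteq># M}.
        of_nat (count N z) * f N * g (?A - N) = 0"
      by (simp add: not_in_iff)
  qed (auto simp: finite_submultisets)
  finally show ?thesis .
qed

lemma mconv_mderiv_right:
  "mconv f (mderiv z g) M
     = (\<Sum>N | N \<subseteq># add_mset z M. of_nat (count (add_mset z M - N) z) * f N * g (add_mset z M - N))"
proof -
  let ?A = "add_mset z M"
  have "mconv f (mderiv z g) M = (\<Sum>N | N \<subseteq># M. of_nat (count (?A - N) z) * f N * g (?A - N))"
    unfolding mconv_def mderiv_def
  proof (rule sum.cong)
    fix N assume "N \<in> {N. N \<subseteq># M}"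
    then have "?A - N = add_mset z (M - N)"
      by (simp add: add_mset_diff_submultiset)
    then show "f N * (of_nat (count (M - N) z + 1) * g (add_mset z (M - N)))
        = of_nat (count (?A - N) z) * f N * g (?A - N)"
      by (simp add: mult_ac)
  qed simp
  also have "\<dots> = (\<Sum>N | N \<subseteq># ?A. of_nat (count (?A - N) z) * f N * g (?A - N))"
  proof (rule sum.mono_neutral_left)
    have "count (?A - N) z = 0" if sub: "N \<subseteq># ?A" and nsub: "\<not> N \<subseteq># M" for N
    proof -
      obtain x where x: "count M x < count N x"
        using nsub by (auto simp: subseteq_mset_def not_le)
      moreover have "count N x \<le> count ?A x"
        using sub by (rule mset_subset_eq_count)
      ultimately have "x = z"
        by (auto split: if_splits)
      with x show ?thesis
        by simp
    qed
    then show "\<forall>N\<in>{N. N \<subseteq># ?A} - {N. N \<subseteq># M}. of_nat (count (?A - N) z) * f N * g (?A - N) = 0"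
      by simp
    show "{N. N \<subseteq># M} \<subseteq> {N. N \<subseteq># ?A}"
      by (auto intro: subset_mset.order_trans[OF _ subset_mset.less_imp_le[OF multi_psub_of_add_self]])
  qed (simp add: finite_submultisets)
  finally show ?thesis .
qed

lemma mderiv_mconv: "mderiv z (mconv f g) M = mconv (mderiv z f) g M + mconv f (mderiv z g) M"
proof -
  let ?A = "add_mset z M"
  have "mconv (mderiv z f) g M + mconv f (mderiv z g) M
      = (\<Sum>N | N \<subseteq># ?A. of_nat (count M z + 1) * (f N * g (?A - N)))"
    unfolding mconv_mderiv_left mconv_mderiv_right sum.distrib[symmetric]
  proof (rule sum.cong)
    fix N assume "N \<in> {N. N \<subseteq># ?A}"
    then have "count N z + count (?A - N) z = count M z + 1"
      by (auto simp: subseteq_mset_def intro: le_add_diff_inverse dest: spec[of _ z])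
    then show "of_nat (count N z) * f N * g (?A - N) + of_nat (count (?A - N) z) * f N * g (?A - N)
        = of_nat (count M z + 1) * (f N * g (?A - N))"
      by (metis distrib_right mult.assoc of_nat_add)
  qed simp
  then show ?thesis
    by (simp add: mderiv_def mconv_def sum_distrib_left)
qed

lemma mderiv_eqI:
  fixes f g :: "'a multiset \<Rightarrow> 'b::{ring_char_0, ring_no_zero_divisors}"
  assumes "f {#} = g {#}" and "\<And>z. mderiv z f = mderiv z g"
  shows "f = g"
proof
  fix M show "f M = g M"
  proof (cases M)
    case (add z M')
    have "of_nat (count M' z + 1) * f M = of_nat (count M' z + 1) * g M"
      using fun_cong[OF assms(2)[of z], of M'] by (simp add: mderiv_def add)
    then show ?thesis by (simp del: of_nat_Suc)
  qed (use assms in simp)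
qed

section \<open>Genus zero identities\<close>

lemma mfact_add_mset: "mfact (add_mset y M) = (count M y + 1) * mfact M"
proof -
  have rest: "(\<Prod>x\<in>set_mset M - {y}. fact (count (add_mset y M) x)) = (\<Prod>x\<in>set_mset M - {y}. fact (count M x))"
    by (rule prod.cong) auto
  have "mfact (add_mset y M) = fact (count (add_mset y M) y) * (\<Prod>x\<in>set_mset M - {y}. fact (count (add_mset y M) x))"
    unfolding mfact_def set_mset_add_mset_insert by (rule prod.insert_remove) simp
  also have "\<dots> = fact (count M y + 1) * (\<Prod>x\<in>set_mset M - {y}. fact (count M x))"
    unfolding rest by simp
  moreover have "mfact M = fact (count M y) * (\<Prod>x\<in>set_mset M - {y}. fact (count M x))"
    by (cases "y \<in># M") (simp_all add: mfact_def prod.remove not_in_iff)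
  ultimately show ?thesis by (simp add: algebra_simps)
qed

lemma dcorr_empty: "dcorr c X {#} = c X"
  by (simp add: dcorr_def mfact_def)

lemma mderiv_dcorr: "mderiv y (dcorr c X) = dcorr c (add_mset y X)"
proof
  fix M
  have shifted: "dcorr c X (add_mset y M) = c (add_mset y (X + M)) / (of_nat (count M y + 1) * of_nat (mfact M))"
    by (simp only: dcorr_def mfact_add_mset of_nat_mult union_mset_add_mset_right)
  then show "mderiv y (dcorr c X) M = dcorr c (add_mset y X) M"
    unfolding mderiv_def shifted by (simp add: dcorr_def del: of_nat_Suc)
qed

lemma matrix_inv_symmetric:
  fixes A :: "'a::field ^ 'n ^ 'n"
  assumes "invertible A" and "transpose A = A"
  shows "transpose (matrix_inv A) = matrix_inv A"
proof -
  have inv: "A ** matrix_inv A = mat 1" "matrix_inv A ** A = mat 1"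
    using assms(1) unfolding invertible_def matrix_inv_def by (metis (mono_tags, lifting) someI_ex)+
  have "transpose (matrix_inv A) ** A = mat 1"
    by (metis inv(1) assms(2) matrix_transpose_mul transpose_mat)
  then show ?thesis
    by (metis inv(1) matrix_mul_assoc matrix_mul_lid matrix_mul_rid)
qed

lemma ginv_commute:
  assumes "invertible (gmat c p)"
  shows "ginv c p a b = ginv c p b a"
proof -
  have "transpose (gmat c p) = gmat c p"
    by (simp add: gmat_def gmet_def transpose_def vec_eq_iff add_mset_commute)
  then have "transpose (matrix_inv (gmat c p)) = matrix_inv (gmat c p)"
    by (rule matrix_inv_symmetric[OF assms])
  then show ?thesis
    unfolding ginv_def by (metis transpose_def vec_lambda_beta)
qed

definition ginv_conv :: "'i::finite corr \<Rightarrow> 'i \<Rightarrow> ('i \<Rightarrow> ('i \<times> nat) multiset \<Rightarrow> complex)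
    \<Rightarrow> ('i \<Rightarrow> ('i \<times> nat) multiset \<Rightarrow> complex) \<Rightarrow> ('i \<times> nat) multiset \<Rightarrow> complex" where
  "ginv_conv c p F G M = (\<Sum>a\<in>UNIV. \<Sum>b\<in>UNIV. ginv c p a b * mconv (F a) (G b) M)"

lemma ginv_conv_commute:
  assumes "invertible (gmat c p)"
  shows "ginv_conv c p F G M = ginv_conv c p G F M"
  unfolding ginv_conv_def
  by (subst sum.swap) (simp add: ginv_commute[OF assms] mconv_commute)

lemma mderiv_ginv_conv:
  "mderiv z (ginv_conv c p F G) M
     = ginv_conv c p (\<lambda>a. mderiv z (F a)) G M + ginv_conv c p F (\<lambda>b. mderiv z (G b)) M"
proof -
  have "mderiv z (ginv_conv c p F G) M = (\<Sum>a\<in>UNIV. \<Sum>b\<in>UNIV. ginv c p a b * mderiv z (mconv (F a) (G b)) M)"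
    by (simp add: ginv_conv_def mderiv_def sum_distrib_left mult_ac)
  then show ?thesis
    by (simp add: mderiv_mconv ginv_conv_def distrib_left sum.distrib)
qed

definition genus0_TRR :: "'i::finite corr \<Rightarrow> 'i \<Rightarrow> bool" where
  "genus0_TRR c p \<longleftrightarrow> (\<forall>a b d i j k M.
     dcorr c {#(a, Suc i), (b, j), (d, k)#} M =
     (\<Sum>s\<in>UNIV. \<Sum>t\<in>UNIV. ginv c p s t *
        mconv (dcorr c {#(a, i), (t, 0)#}) (dcorr c {#(s, 0), (b, j), (d, k)#}) M))"

definition desc_succ :: "'i \<times> nat \<Rightarrow> 'i \<times> nat" where
  "desc_succ x = (fst x, Suc (snd x))"

lemma genus0_TRR_ginv_conv:
  assumes "genus0_TRR c p" and "invertible (gmat c p)"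
  shows "dcorr c {#desc_succ x, y, z#} M
     = ginv_conv c p (\<lambda>a. dcorr c {#x, (a, 0)#}) (\<lambda>b. dcorr c {#y, (b, 0), z#}) M"
proof -
  have "dcorr c {#desc_succ x, y, z#} M
      = (\<Sum>s\<in>UNIV. \<Sum>t\<in>UNIV. ginv c p t s * mconv (dcorr c {#x, (t, 0)#}) (dcorr c {#y, (s, 0), z#}) M)"
    using assms(1) unfolding genus0_TRR_def desc_succ_def
    by (cases x; cases y; cases z) (simp add: ginv_commute[OF assms(2)] add_mset_commute)
  also have "\<dots> = ginv_conv c p (\<lambda>a. dcorr c {#x, (a, 0)#}) (\<lambda>b. dcorr c {#y, (b, 0), z#}) M"
    unfolding ginv_conv_def by (rule sum.swap)
  finally show ?thesis .
qed

lemma mderiv_ginv_conv_two_point: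
  assumes "genus0_TRR c p" and "invertible (gmat c p)"
  shows "mderiv z (ginv_conv c p (\<lambda>a. dcorr c {#x, (a, 0)#}) (\<lambda>b. dcorr c {#y, (b, 0)#})) M
    = dcorr c {#desc_succ y, x, z#} M + dcorr c {#desc_succ x, y, z#} M"
proof -
  let ?F = "\<lambda>a. dcorr c {#x, (a, 0)#}" and ?G = "\<lambda>b. dcorr c {#y, (b, 0)#}"
  have "ginv_conv c p (\<lambda>a. mderiv z (?F a)) ?G M = ginv_conv c p ?G (\<lambda>a. dcorr c {#x, (a, 0), z#}) M"
    by (simp add: mderiv_dcorr ginv_conv_commute[OF assms(2)] add_mset_commute)
  also have "\<dots> = dcorr c {#desc_succ y, x, z#} M"
    by (rule genus0_TRR_ginv_conv[OF assms, symmetric])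
  finally have left: "ginv_conv c p (\<lambda>a. mderiv z (?F a)) ?G M = dcorr c {#desc_succ y, x, z#} M" .
  have "ginv_conv c p ?F (\<lambda>b. mderiv z (?G b)) M = ginv_conv c p ?F (\<lambda>b. dcorr c {#y, (b, 0), z#}) M"
    by (simp add: mderiv_dcorr add_mset_commute)
  also have "\<dots> = dcorr c {#desc_succ x, y, z#} M"
    by (rule genus0_TRR_ginv_conv[OF assms, symmetric])
  finally show ?thesis
    by (simp add: mderiv_ginv_conv left)
qed

(* Both sides vanish for M = {#}, where there are fewer than three insertions, and by the
   TRR they have the same derivatives d/db_z. *)
lemma genus0_two_point:
  assumes "\<forall>X. size X < 3 \<longrightarrow> c X = 0" and "genus0_TRR c p" and "invertible (gmat c p)"
  shows "dcorr c {#desc_succ x, y#} M + dcorr c {#x, desc_succ y#} M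
     = ginv_conv c p (\<lambda>a. dcorr c {#x, (a, 0)#}) (\<lambda>b. dcorr c {#y, (b, 0)#}) M"
proof -
  have "(\<lambda>M. dcorr c {#desc_succ x, y#} M + dcorr c {#x, desc_succ y#} M)
      = ginv_conv c p (\<lambda>a. dcorr c {#x, (a, 0)#}) (\<lambda>b. dcorr c {#y, (b, 0)#})"
  proof (rule mderiv_eqI)
    show "dcorr c {#desc_succ x, y#} {#} + dcorr c {#x, desc_succ y#} {#}
        = ginv_conv c p (\<lambda>a. dcorr c {#x, (a, 0)#}) (\<lambda>b. dcorr c {#y, (b, 0)#}) {#}"
      using assms(1) by (simp add: dcorr_empty ginv_conv_def mconv_empty)
    show "mderiv z (\<lambda>M. dcorr c {#desc_succ x, y#} M + dcorr c {#x, desc_succ y#} M)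
        = mderiv z (ginv_conv c p (\<lambda>a. dcorr c {#x, (a, 0)#}) (\<lambda>b. dcorr c {#y, (b, 0)#}))" for z
      by (rule ext)
        (simp add: mderiv_add mderiv_dcorr mderiv_ginv_conv_two_point[OF assms(2,3)] add_mset_commute)
  qed
  then show ?thesis
    by (rule fun_cong)
qed

section \<open>Coefficients of products and derivations\<close>

lemma vless_asym: "vless v w \<Longrightarrow> \<not> vless w v"
  by (auto simp: vless_def)

lemma vless_linear: "v \<noteq> w \<Longrightarrow> vless v w \<or> vless w v"
  by (cases v; cases w) (auto simp: vless_def)

lemma vless_if_fst_less: "fst v < fst w \<Longrightarrow> vless v w"
  by (simp add: vless_def)

lemma ksign_empty_left [simp]: "ksign {} B = 1"
  by (simp add: ksign_def)

lemma ksign_empty_right [simp]: "ksign A {} = 1"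
  by (simp add: ksign_def)

lemma ksign_singleton: "ksign {a} {b} = (if vless b a then -1 else 1)"
proof -
  have "{(x, y). x \<in> {a} \<and> y \<in> {b} \<and> vless y x} = (if vless b a then {(a, b)} else {})"
    by auto
  then show ?thesis by (simp add: ksign_def)
qed

lemma ksign_singleton_swap: "u \<noteq> w \<Longrightarrow> ksign {w} {u} = - ksign {u} {w}"
  using vless_linear[of u w] vless_asym[of u w] by (auto simp: ksign_singleton)

lemma smul_infinite: "infinite (snd N) \<Longrightarrow> smul f g N = 0"
  by (simp add: smul_def)

lemma smul_gen_e:
  assumes "finite Q"
  shows "smul (gen_e w) f (E, Q) = (if w \<in># E then f (E - {#w#}, Q) else 0)"
proof -
  have "(\<Sum>Q1\<in>Pow Q. ksign Q1 (Q - Q1) * gen_e w (E1, Q1) * f (E - E1, Q - Q1))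
      = (if E1 = {#w#} then f (E - E1, Q) else 0)" for E1
    using assms by (simp add: gen_e_def if_distrib if_distribR sum.delta cong: if_cong)
  then show ?thesis
    by (simp add: smul_def sum.delta' finite_submultisets)
qed

lemma smul_gen_o:
  assumes "finite Q"
  shows "smul (gen_o w) f (E, Q) = (if w \<in> Q then ksign {w} (Q - {w}) * f (E, Q - {w}) else 0)"
proof -
  have "(\<Sum>Q1\<in>Pow Q. ksign Q1 (Q - Q1) * gen_o w (E1, Q1) * f (E - E1, Q - Q1))
      = (if E1 = {#} \<and> w \<in> Q then ksign {w} (Q - {w}) * f (E, Q - {w}) else 0)" for E1
    using assms by (cases "E1 = {#}") (simp_all add: gen_o_def if_distrib if_distribR sum.delta' cong: if_cong)
  then show ?thesis
    by (simp add: smul_def sum.delta' finite_submultisets)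
qed

lemma smul_nonzero:
  assumes "smul f g (E, Q) \<noteq> 0"
  obtains E1 Q1 where "E1 \<subseteq># E" "Q1 \<subseteq> Q" "f (E1, Q1) \<noteq> 0" "g (E - E1, Q - Q1) \<noteq> 0"
proof -
  from assms obtain E1 where "E1 \<in> {E1. E1 \<subseteq># E}"
    and "(\<Sum>Q1\<in>Pow Q. ksign Q1 (Q - Q1) * f (E1, Q1) * g (E - E1, Q - Q1)) \<noteq> 0"
    unfolding smul_def by (auto elim: sum.not_neutral_contains_not_neutral)
  moreover from this(2) obtain Q1 where "Q1 \<in> Pow Q"
    and "ksign Q1 (Q - Q1) * f (E1, Q1) * g (E - E1, Q - Q1) \<noteq> 0"
    by (rule sum.not_neutral_contains_not_neutral)
  ultimately show thesis
    using that by simp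
qed

lemma smul_singleton_left:
  assumes "finite Q" and single: "\<And>E Q. f (E, Q) \<noteq> 0 \<Longrightarrow> card Q = 1"
  shows "smul f g (E, Q)
    = (\<Sum>u\<in>Q. ksign {u} (Q - {u}) * (\<Sum>E1 | E1 \<subseteq># E. f (E1, {u}) * g (E - E1, Q - {u})))"
proof -
  have odd: "(\<Sum>Q1\<in>Pow Q. ksign Q1 (Q - Q1) * f (E1, Q1) * g (E - E1, Q - Q1))
      = (\<Sum>u\<in>Q. ksign {u} (Q - {u}) * f (E1, {u}) * g (E - E1, Q - {u}))" for E1
  proof -
    have "(\<Sum>Q1\<in>Pow Q. ksign Q1 (Q - Q1) * f (E1, Q1) * g (E - E1, Q - Q1))
        = (\<Sum>Q1\<in>(\<lambda>u. {u}) ` Q. ksign Q1 (Q - Q1) * f (E1, Q1) * g (E - E1, Q - Q1))"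
    proof (rule sum.mono_neutral_right)
      show "\<forall>Q1\<in>Pow Q - (\<lambda>u. {u}) ` Q. ksign Q1 (Q - Q1) * f (E1, Q1) * g (E - E1, Q - Q1) = 0"
        using single by (force simp: card_1_singleton_iff)
    qed (use assms(1) in auto)
    also have "\<dots> = (\<Sum>u\<in>Q. ksign {u} (Q - {u}) * f (E1, {u}) * g (E - E1, Q - {u}))"
      by (rule sum.reindex_cong[where l="\<lambda>u. {u}"]) (auto simp: inj_on_def)
    finally show ?thesis .
  qed
  have "smul f g (E, Q) = (\<Sum>E1 | E1 \<subseteq># E. \<Sum>u\<in>Q. ksign {u} (Q - {u}) * f (E1, {u}) * g (E - E1, Q - {u}))"
    by (simp add: smul_def odd)
  also have "\<dots> = (\<Sum>u\<in>Q. \<Sum>E1 | E1 \<subseteq># E. ksign {u} (Q - {u}) * (f (E1, {u}) * g (E - E1, Q - {u})))"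
    by (subst sum.swap) (simp add: mult.assoc)
  finally show ?thesis
    by (simp add: sum_distrib_left)
qed

lemma infsum_eq_sum_support:
  fixes h :: "'a \<Rightarrow> 'b::{comm_monoid_add, t2_space}"
  assumes "finite S" and "\<And>x. x \<notin> S \<Longrightarrow> h x = 0"
  shows "infsum h UNIV = sum h S"
  using assms by (subst infsum_cong_neutral[where T=S and g=h]) auto

lemma dz_infinite: "infinite Q \<Longrightarrow> dz f (E, Q) = 0"
  by (simp add: dz_def smul_infinite)

lemma dz_eq_sum:
  assumes "finite Q"
  shows "dz f (E, Q) = (\<Sum>v\<in>sh -` set_mset E. pe v f (E - {#sh v#}, Q))
     + (\<Sum>v\<in>sh -` Q. ksign {sh v} (Q - {sh v}) * po v f (E, Q - {sh v}))"
proof -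
  let ?A = "sh -` set_mset E" and ?B = "sh -` Q"
  have "inj sh" by (auto simp: inj_def sh_def prod_eq_iff)
  then have fin: "finite ?A" "finite ?B"
    using assms by (auto intro: finite_vimageI)
  have "dz f (E, Q) = (\<Sum>\<^sub>\<infinity>v. (if v \<in> ?A then pe v f (E - {#sh v#}, Q) else 0)
      + (if v \<in> ?B then ksign {sh v} (Q - {sh v}) * po v f (E, Q - {sh v}) else 0))"
    unfolding dz_def smul_gen_e[OF assms] smul_gen_o[OF assms] by simp
  also have "\<dots> = (\<Sum>v\<in>?A \<union> ?B. (if v \<in> ?A then pe v f (E - {#sh v#}, Q) else 0)
      + (if v \<in> ?B then ksign {sh v} (Q - {sh v}) * po v f (E, Q - {sh v}) else 0))"
    by (rule infsum_eq_sum_support) (use fin in auto)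
  also have "\<dots> = (\<Sum>v\<in>?A. pe v f (E - {#sh v#}, Q))
      + (\<Sum>v\<in>?B. ksign {sh v} (Q - {sh v}) * po v f (E, Q - {sh v}))"
  proof -
    have "(?A \<union> ?B) \<inter> ?A = ?A" "(?A \<union> ?B) \<inter> ?B = ?B" by auto
    moreover have "finite (?A \<union> ?B)" using fin by simp
    ultimately show ?thesis by (simp only: sum.distrib flip: sum.inter_restrict)
  qed
  finally show ?thesis .
qed

definition delta_var :: "'i var \<Rightarrow> 'i var" where
  "delta_var v = (Suc (fst v), fst (snd v), snd (snd v) - 1)"

lemma delta_infinite: "infinite Q \<Longrightarrow> delta f (E, Q) = 0"
  unfolding delta_def by (rule infsum_0) (auto simp: smul_infinite split: prod.splits)

lemma delta_eq_sum:
  assumes "finite Q"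
  shows "delta f (E, Q) = (\<Sum>v\<in>delta_var -` Q \<inter> {v. 0 < snd (snd v)}.
     ksign {delta_var v} (Q - {delta_var v}) * pe v f (E, Q - {delta_var v}))"
proof -
  let ?S = "delta_var -` Q \<inter> {v. 0 < snd (snd v)}"
  have "inj_on delta_var {v. 0 < snd (snd v)}"
    by (auto simp: inj_on_def delta_var_def prod_eq_iff)
  then have fin: "finite ?S"
    using assms by (rule finite_vimage_IntI[rotated])
  have "delta f (E, Q) = (\<Sum>\<^sub>\<infinity>v. if v \<in> ?S
      then ksign {delta_var v} (Q - {delta_var v}) * pe v f (E, Q - {delta_var v}) else 0)"
    unfolding delta_def smul_gen_o[OF assms]
    by (rule arg_cong[where f="\<lambda>h. infsum h UNIV"]) (auto simp: delta_var_def split: prod.splits)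
  also have "\<dots> = (\<Sum>v\<in>?S. if v \<in> ?S
      then ksign {delta_var v} (Q - {delta_var v}) * pe v f (E, Q - {delta_var v}) else 0)"
    by (rule infsum_eq_sum_support) (use fin in auto)
  finally show ?thesis by simp
qed

section \<open>Monomials without z-derivatives\<close>

abbreviation underived :: "('i \<times> nat) multiset \<Rightarrow> 'i var multiset" where
  "underived M \<equiv> image_mset (Pair 0) M"

lemma count_underived: "count (underived M) (m, x) = (if m = 0 then count M x else 0)"
  by (induction M) auto

lemma fst_in_underived: "v \<in># underived M \<Longrightarrow> fst v = 0"
  by auto

lemma image_snd_underived [simp]: "image_mset snd (underived M) = M"
  by (simp add: multiset.map_comp o_def)

lemma underived_image_snd: "\<forall>v\<in>#E. fst v = 0 \<Longrightarrow> underived (image_mset snd E) = E"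
  by (induction E) (auto simp: prod_eq_iff)

lemma inj_on_underived: "inj_on underived A"
  by (rule inj_on_inverseI[where g="image_mset snd"]) simp

lemma submultisets_underived: "{E1. E1 \<subseteq># underived M} = underived ` {M1. M1 \<subseteq># M}"
proof
  show "underived ` {M1. M1 \<subseteq># M} \<subseteq> {E1. E1 \<subseteq># underived M}"
    by (auto intro: image_mset_subseteq_mono)
next
  show "{E1. E1 \<subseteq># underived M} \<subseteq> underived ` {M1. M1 \<subseteq># M}"
  proof
    fix E1 assume "E1 \<in> {E1. E1 \<subseteq># underived M}"
    then have sub: "E1 \<subseteq># underived M" by simp
    then have "\<forall>v\<in>#E1. fst v = 0"
      by (auto dest: mset_subset_eqD)
    then have "E1 = underived (image_mset snd E1)"
      by (simp add: underived_image_snd)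
    moreover have "image_mset snd E1 \<subseteq># M"
      using image_mset_subseteq_mono[OF sub, of snd] by simp
    ultimately show "E1 \<in> underived ` {M1. M1 \<subseteq># M}"
      by blast
  qed
qed

lemma sum_submultisets_underived:
  assumes D: "\<forall>v\<in>#D. fst v \<noteq> 0"
    and supp: "\<And>E1. E1 \<subseteq># D + underived M \<Longrightarrow> h E1 \<noteq> 0 \<Longrightarrow> \<forall>v\<in>#E1. fst v = 0"
  shows "(\<Sum>E1 | E1 \<subseteq># D + underived M. h E1) = (\<Sum>M1 | M1 \<subseteq># M. h (underived M1))"
proof -
  have "(\<Sum>E1 | E1 \<subseteq># D + underived M. h E1) = (\<Sum>E1 | E1 \<subseteq># underived M. h E1)"
  proof (rule sum.mono_neutral_right)
    show "{E1. E1 \<subseteq># underived M} \<subseteq> {E1. E1 \<subseteq># D + underived M}"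
      using subset_mset.order_trans[OF _ mset_subset_eq_add_right] by blast
    show "\<forall>E1\<in>{E1. E1 \<subseteq># D + underived M} - {E1. E1 \<subseteq># underived M}. h E1 = 0"
    proof (rule ballI, rule ccontr)
      fix E1 assume E1: "E1 \<in> {E1. E1 \<subseteq># D + underived M} - {E1. E1 \<subseteq># underived M}"
        and nz: "h E1 \<noteq> 0"
      from E1 have sub: "E1 \<subseteq># D + underived M" and nsub: "\<not> E1 \<subseteq># underived M"
        by simp_all
      from supp[OF sub nz] have fst0: "\<forall>v\<in>#E1. fst v = 0" .
      have "count E1 v \<le> count (underived M) v" for v
      proof (cases "v \<in># E1")
        case True
        with D fst0 have "v \<notin># D"
          by blast
        then have "count D v = 0"
          by (simp add: not_in_iff)
        moreover have "count E1 v \<le> count D v + count (underived M) v"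
          using mset_subset_eq_count[OF sub] by simp
        ultimately show ?thesis by simp
      qed (simp add: not_in_iff)
      then have "E1 \<subseteq># underived M"
        by (rule mset_subset_eqI)
      with nsub show False by contradiction
    qed
  qed (simp add: finite_submultisets)
  also have "\<dots> = (\<Sum>M1 | M1 \<subseteq># M. h (underived M1))"
    unfolding submultisets_underived by (rule sum.reindex[OF inj_on_underived, unfolded comp_def])
  finally show ?thesis .
qed

lemma pe_underived: "pe (0, x) f (underived M, Q) = mderiv x (\<lambda>M. f (underived M, Q)) M"
  by (simp add: pe_def mderiv_def count_underived)

lemma sh_eq_iff: "sh v = w \<longleftrightarrow> fst w \<noteq> 0 \<and> v = (fst w - 1, snd w)"
  by (cases v; cases w) (auto simp: sh_def)

lemma dz_coeff_dlam:
  assumes "finite Q" and "\<forall>u\<in>Q. fst u = 0"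
  shows "dz f (add_mset (1, z) (underived M), Q) = mderiv z (\<lambda>M. f (underived M, Q)) M"
proof -
  have "sh -` set_mset (add_mset (1, z) (underived M)) = {(0, z)}"
    by (auto simp: sh_eq_iff eq_commute[of _ "sh _"])
  moreover have "sh -` Q = {}"
    using assms(2) by (auto simp: sh_def)
  ultimately show ?thesis
    by (simp add: dz_eq_sum[OF assms(1)] sh_def pe_underived)
qed

lemma dz_coeff_drho:
  assumes "finite Q" and "\<forall>u\<in>Q. fst u = 0" and "fst w = 1"
  shows "dz f (underived M, insert w Q) = ksign {w} Q * po (0, snd w) f (underived M, Q)"
proof -
  have "sh -` set_mset (underived M) = {}"
    by (auto simp: sh_def)
  moreover have "sh -` insert w Q = {(0, snd w)}"
    using assms(2,3) by (auto simp: sh_eq_iff eq_commute[of _ "sh _"])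
  moreover have "sh (0, snd w) = w" "w \<notin> Q"
    using assms(2,3) by (auto simp: sh_def prod_eq_iff)
  ultimately show ?thesis
    using assms(1) by (simp add: dz_eq_sum)
qed

lemma dz_nonzero_vars:
  assumes "dz f (E, Q) \<noteq> 0"
  shows "(\<exists>v. sh v \<in># E \<and> f (add_mset v (E - {#sh v#}), Q) \<noteq> 0)
    \<or> (\<exists>v. sh v \<in> Q \<and> v \<notin> Q - {sh v} \<and> f (E, insert v (Q - {sh v})) \<noteq> 0)"
proof -
  have "finite Q"
    using assms dz_infinite by blast
  then have "(\<Sum>v\<in>sh -` set_mset E. pe v f (E - {#sh v#}, Q)) \<noteq> 0
      \<or> (\<Sum>v\<in>sh -` Q. ksign {sh v} (Q - {sh v}) * po v f (E, Q - {sh v})) \<noteq> 0"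
    using assms by (auto simp: dz_eq_sum)
  then show ?thesis
  proof
    assume "(\<Sum>v\<in>sh -` set_mset E. pe v f (E - {#sh v#}, Q)) \<noteq> 0"
    then obtain v where "v \<in> sh -` set_mset E" "pe v f (E - {#sh v#}, Q) \<noteq> 0"
      by (rule sum.not_neutral_contains_not_neutral)
    then have "sh v \<in># E" "f (add_mset v (E - {#sh v#}), Q) \<noteq> 0"
      by (simp_all add: pe_def)
    then show ?thesis
      by blast
  next
    assume "(\<Sum>v\<in>sh -` Q. ksign {sh v} (Q - {sh v}) * po v f (E, Q - {sh v})) \<noteq> 0"
    then obtain v where "v \<in> sh -` Q" "ksign {sh v} (Q - {sh v}) * po v f (E, Q - {sh v}) \<noteq> 0"
      by (rule sum.not_neutral_contains_not_neutral)
    then have "sh v \<in> Q" "v \<notin> Q - {sh v}" "f (E, insert v (Q - {sh v})) \<noteq> 0"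
      unfolding po_def by (simp_all split: if_splits)
    then show ?thesis
      by blast
  qed
qed

lemma dz_nonzero_cases:
  assumes "dz f (E, Q) \<noteq> 0"
    and supp: "\<And>E Q. f (E, Q) \<noteq> 0 \<Longrightarrow> (\<forall>v\<in>#E. fst v = 0) \<and> (\<forall>v\<in>Q. fst v = 0)"
  obtains (dlam) M z where "E = add_mset (1, z) (underived M)"
      "f (add_mset (0, z) (underived M), Q) \<noteq> 0"
    | (drho) w Q' where "Q = insert w Q'" "fst w = 1" "(0, snd w) \<notin> Q'"
      "f (E, insert (0, snd w) Q') \<noteq> 0"
  using dz_nonzero_vars[OF assms(1)]
proof (elim disjE exE conjE)
  fix v assume "sh v \<in># E" and nz: "f (add_mset v (E - {#sh v#}), Q) \<noteq> 0"
  from supp[OF nz] have v0: "fst v = 0" and restE: "\<forall>u\<in>#E - {#sh v#}. fst u = 0"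
    unfolding set_mset_add_mset_insert ball_simps by blast+
  from restE have rest: "underived (image_mset snd (E - {#sh v#})) = E - {#sh v#}"
    by (rule underived_image_snd)
  from v0 have v: "v = (0, snd v)" "sh v = (1, snd v)"
    by (simp_all add: prod_eq_iff sh_def)
  show thesis
  proof (rule dlam)
    show "E = add_mset (1, snd v) (underived (image_mset snd (E - {#sh v#})))"
      using \<open>sh v \<in># E\<close> unfolding rest unfolding v(2) by simp
    show "f (add_mset (0, snd v) (underived (image_mset snd (E - {#sh v#}))), Q) \<noteq> 0"
      using nz unfolding rest by (simp flip: v(1))
  qed
next
  fix v assume "sh v \<in> Q" and new: "v \<notin> Q - {sh v}" and nz: "f (E, insert v (Q - {sh v})) \<noteq> 0"
  from supp[OF nz] have "fst v = 0"
    by simp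
  then have v: "v = (0, snd (sh v))" "fst (sh v) = 1"
    by (simp_all add: sh_def prod_eq_iff)
  show thesis
  proof (rule drho)
    show "Q = insert (sh v) (Q - {sh v})"
      using \<open>sh v \<in> Q\<close> by blast
    show "(0, snd (sh v)) \<notin> Q - {sh v}"
      using new by (simp flip: v(1))
    show "f (E, insert (0, snd (sh v)) (Q - {sh v})) \<noteq> 0"
      using nz by (simp flip: v(1))
  qed (rule v(2))
qed

lemma insert_eq_doubletonE:
  assumes "insert a A = {u, w}" and "a \<notin> A" and "u \<noteq> w"
  obtains x where "x \<in> {u, w}" and "A = {x}"
proof -
  have "finite (insert a A)"
    unfolding assms(1) by simp
  then have "Suc (card A) = card (insert a A)"
    using assms(2) by simp
  also have "\<dots> = 2"
    unfolding assms(1) using assms(3) by simp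
  finally have "card A = 1"
    by simp
  then obtain x where A: "A = {x}"
    by (rule card_1_singletonE)
  then have "x \<in> insert a A"
    by simp
  then have "x \<in> {u, w}"
    unfolding assms(1) .
  with A show thesis
    using that by blast
qed

(* The monomials lambda^M rho_u (d_z rho_w) and lambda^M (d_z lambda_z) rho_u rho_w, where
   lambda^M, rho_u, rho_w carry no z-derivative; the Maurer-Cartan expression vanishes
   on all other monomials. *)
definition drho_mono :: "'i var multiset \<Rightarrow> 'i var set \<Rightarrow> bool" where
  "drho_mono E Q \<longleftrightarrow> (\<exists>M u w. E = underived M \<and> Q = {u, w} \<and> fst u = 0 \<and> fst w = 1)"

definition dlam_mono :: "'i var multiset \<Rightarrow> 'i var set \<Rightarrow> bool" where
  "dlam_mono E Q \<longleftrightarrow>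
    (\<exists>M z u w. E = add_mset (1, z) (underived M) \<and> Q = {u, w} \<and> u \<noteq> w \<and> fst u = 0 \<and> fst w = 0)"

lemma drho_monoI: "fst u = 0 \<Longrightarrow> fst w = 1 \<Longrightarrow> drho_mono (underived M) {u, w}"
  unfolding drho_mono_def by blast

lemma dlam_monoI:
  "u \<noteq> w \<Longrightarrow> fst u = 0 \<Longrightarrow> fst w = 0 \<Longrightarrow> dlam_mono (add_mset (1, z) (underived M)) {u, w}"
  unfolding dlam_mono_def by blast

lemma not_drho_mono_dlam: "\<not> drho_mono (add_mset (1, z) (underived M)) Q"
proof
  assume "drho_mono (add_mset (1, z) (underived M)) Q"
  then obtain M' where "add_mset (1, z) (underived M) = underived M'"
    unfolding drho_mono_def by blast
  then have "(1, z) \<in># underived M'"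
    by (metis union_single_eq_member)
  then show False
    by auto
qed

section \<open>Coefficients of L^H and its derivatives\<close>

lemma LH_underived: "LH c (underived M, {u}) = (if fst u = 0 then dcorr c {#snd u#} M else 0)"
  by (auto simp: LH_def)

lemma LH_nonzero:
  assumes "LH c (E, Q) \<noteq> 0"
  shows "\<exists>M u. E = underived M \<and> Q = {u} \<and> fst u = 0"
proof -
  from assms have E: "\<forall>v\<in>#E. fst v = 0" and "card Q = 1" and Q: "\<forall>v\<in>Q. fst v = 0"
    by (auto simp: LH_def split: if_splits)
  then obtain u where "Q = {u}" by (auto simp: card_Suc_eq)
  with E Q show ?thesis by (metis underived_image_snd insertI1)
qed

lemma pe_zero: "pe v (\<lambda>_. 0) = (\<lambda>_. 0)"
  by (rule ext) (simp add: pe_def)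

lemma po_zero: "po v (\<lambda>_. 0) = (\<lambda>_. 0)"
  by (rule ext) (simp add: po_def)

lemma dz_funpow_zero: "(dz ^^ k) (\<lambda>_. 0) = (\<lambda>_. 0)"
proof -
  have dz0: "dz (\<lambda>_. 0) = (\<lambda>_. 0)"
    by (intro ext) (simp add: dz_def smul_def pe_zero po_zero)
  show ?thesis
    by (induction k) (simp_all add: dz0)
qed

(* L^H contains no z-derivatives of lambda, so only the k = 0 term of the variational
   derivative survives. *)
lemma vd_LH: "vd a (LH c) = pe (0, a, 0) (LH c)"
proof
  fix N
  have "pe (k, a, 0) (LH c) = (\<lambda>_. 0)" if "k \<noteq> 0" for k
    using that by (auto simp: pe_def LH_def)
  then show "vd a (LH c) N = pe (0, a, 0) (LH c) N"
    unfolding vd_def by (subst suminf_finite[of "{0}"]) (auto simp: dz_funpow_zero)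
qed

lemma vd_LH_underived:
  "vd a (LH c) (underived M, {u}) = (if fst u = 0 then dcorr c {#snd u, (a, 0)#} M else 0)"
proof -
  have "vd a (LH c) (underived M, {u}) = mderiv (a, 0) (\<lambda>M. LH c (underived M, {u})) M"
    unfolding vd_LH pe_underived ..
  then show ?thesis
    by (cases "fst u = 0") (simp_all add: LH_underived mderiv_dcorr add_mset_commute, simp add: mderiv_def)
qed

lemma vd_LH_nonzero:
  assumes "vd a (LH c) (E, Q) \<noteq> 0"
  shows "\<exists>M u. E = underived M \<and> Q = {u} \<and> fst u = 0"
proof -
  from assms have "LH c (add_mset (0, a, 0) E, Q) \<noteq> 0"
    by (simp add: vd_LH pe_def)
  then obtain M u where E: "add_mset (0, a, 0) E = underived M" and "Q = {u}" "fst u = 0"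
    using LH_nonzero by blast
  moreover from E have "\<forall>v\<in>#E. fst v = 0"
    by (metis fst_in_underived union_iff add_mset_add_single)
  ultimately show ?thesis
    using underived_image_snd by metis
qed

lemma vd_LH_support:
  "vd a (LH c) (E, Q) \<noteq> 0 \<Longrightarrow> (\<forall>v\<in>#E. fst v = 0) \<and> (\<forall>v\<in>Q. fst v = 0)"
  by (drule vd_LH_nonzero) auto

lemma vd_LH_card_one: "vd a (LH c) (E, Q) \<noteq> 0 \<Longrightarrow> card Q = 1"
  by (auto dest: vd_LH_nonzero)

lemma dz_vd_LH_drho:
  assumes "fst w = 1"
  shows "dz (vd b (LH c)) (underived M, {w}) = dcorr c {#snd w, (b, 0)#} M"
proof -
  have "dz (vd b (LH c)) (underived M, {w}) = po (0, snd w) (vd b (LH c)) (underived M, {})"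
    using dz_coeff_drho[of "{}" w "vd b (LH c)" M] assms by simp
  also have "\<dots> = vd b (LH c) (underived M, {(0, snd w)})"
    by (simp add: po_def)
  finally show ?thesis
    by (simp add: vd_LH_underived)
qed

lemma dz_vd_LH_dlam:
  assumes "fst u = 0"
  shows "dz (vd b (LH c)) (add_mset (1, z) (underived M), {u}) = dcorr c {#snd u, (b, 0), z#} M"
proof -
  have "dz (vd b (LH c)) (add_mset (1, z) (underived M), {u})
      = mderiv z (\<lambda>M. vd b (LH c) (underived M, {u})) M"
    by (rule dz_coeff_dlam) (use assms in auto)
  also have "(\<lambda>M. vd b (LH c) (underived M, {u})) = dcorr c {#snd u, (b, 0)#}"
    using assms by (simp add: vd_LH_underived)
  finally show ?thesis
    by (simp add: mderiv_dcorr add_mset_commute)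
qed

lemma dz_vd_LH_nonzero:
  assumes "dz (vd b (LH c)) (E, Q) \<noteq> 0"
  shows "(\<exists>M w. E = underived M \<and> Q = {w} \<and> fst w = 1)
    \<or> (\<exists>M z u. E = add_mset (1, z) (underived M) \<and> Q = {u} \<and> fst u = 0)"
proof (rule dz_nonzero_cases[OF assms vd_LH_support])
  fix M z
  assume E: "E = add_mset (1, z) (underived M)"
    and nz: "vd b (LH c) (add_mset (0, z) (underived M), Q) \<noteq> 0"
  from vd_LH_nonzero[OF nz] obtain u where "Q = {u}" "fst u = 0" by blast
  with E show ?thesis by blast
next
  fix w Q'
  assume drho: "Q = insert w Q'" "fst w = 1" "(0, snd w) \<notin> Q'" "vd b (LH c) (E, insert (0, snd w) Q') \<noteq> 0"
  from vd_LH_nonzero[OF drho(4)] obtain M u where "E = underived M" "insert (0, snd w) Q' = {u}"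
    by blast
  moreover from this(2) have "Q' = {}"
    using drho(3) by (auto simp: insert_eq_iff)
  ultimately show ?thesis
    using drho(1,2) by blast
qed

lemma delta_LH_drho:
  assumes "fst u = 0" and "fst w = 1"
  shows "delta (LH c) (underived M, {u, w}) = - dcorr c {#snd u, desc_succ (snd w)#} M"
proof -
  let ?v = "(0, fst (snd w), Suc (snd (snd w)))"
  have "delta_var v = w \<longleftrightarrow> v = ?v" if "0 < snd (snd v)" for v
    using that assms(2) by (cases v; cases w) (auto simp: delta_var_def)
  moreover have "delta_var v \<noteq> u" for v
    using assms(1) by (auto simp: delta_var_def)
  ultimately have "delta_var -` {u, w} \<inter> {v. 0 < snd (snd v)} = {?v}"
    by auto
  moreover have "delta_var ?v = w" "{u, w} - {w} = {u}"
    using assms by (auto simp: delta_var_def prod_eq_iff)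
  ultimately have "delta (LH c) (underived M, {u, w}) = ksign {w} {u} * pe ?v (LH c) (underived M, {u})"
    by (simp add: delta_eq_sum)
  also have "ksign {w} {u} = -1"
    using assms by (simp add: ksign_singleton vless_if_fst_less)
  also have "pe ?v (LH c) (underived M, {u}) = mderiv (snd ?v) (dcorr c {#snd u#}) M"
    using assms(1) by (simp add: pe_underived[of "snd ?v", simplified] LH_underived)
  finally show ?thesis
    by (simp add: mderiv_dcorr desc_succ_def add_mset_commute)
qed

lemma delta_LH_nonzero:
  assumes "delta (LH c) (E, Q) \<noteq> 0"
  shows "drho_mono E Q"
proof -
  have "finite Q"
    using assms delta_infinite by blast
  with assms have "(\<Sum>v\<in>delta_var -` Q \<inter> {v. 0 < snd (snd v)}.
      ksign {delta_var v} (Q - {delta_var v}) * pe v (LH c) (E, Q - {delta_var v})) \<noteq> 0"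
    by (simp add: delta_eq_sum)
  then obtain v where "v \<in> delta_var -` Q \<inter> {v. 0 < snd (snd v)}"
    and "ksign {delta_var v} (Q - {delta_var v}) * pe v (LH c) (E, Q - {delta_var v}) \<noteq> 0"
    by (rule sum.not_neutral_contains_not_neutral)
  then have v: "delta_var v \<in> Q" and "LH c (add_mset v E, Q - {delta_var v}) \<noteq> 0"
    by (auto simp: pe_def)
  then obtain M u where E: "add_mset v E = underived M" and Q: "Q - {delta_var v} = {u}"
    and "fst u = 0"
    using LH_nonzero by blast
  have "\<forall>x\<in>#add_mset v E. fst x = 0"
    unfolding E by auto
  then have "fst v = 0" and "\<forall>x\<in>#E. fst x = 0"
    unfolding set_mset_add_mset_insert ball_simps by blast+
  then have rest: "underived (image_mset snd E) = E" and "fst (delta_var v) = 1"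
    by (simp_all add: underived_image_snd delta_var_def)
  with \<open>fst u = 0\<close> have "drho_mono (underived (image_mset snd E)) {u, delta_var v}"
    by (intro drho_monoI)
  moreover from v Q have "Q = {u, delta_var v}"
    by blast
  ultimately show ?thesis
    unfolding rest by simp
qed

lemma sum_vd_LH_submultisets:
  assumes "\<forall>v\<in>#D. fst v \<noteq> 0"
  shows "(\<Sum>E1 | E1 \<subseteq># D + underived M. vd a (LH c) (E1, {x}) * g (D + underived M - E1))
    = (\<Sum>M1 | M1 \<subseteq># M. vd a (LH c) (underived M1, {x}) * g (D + underived (M - M1)))"
proof -
  have "(\<Sum>E1 | E1 \<subseteq># D + underived M. vd a (LH c) (E1, {x}) * g (D + underived M - E1))
      = (\<Sum>M1 | M1 \<subseteq># M. vd a (LH c) (underived M1, {x}) * g (D + underived M - underived M1))"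
  proof (rule sum_submultisets_underived[OF assms])
    fix E1 assume "E1 \<subseteq># D + underived M" and "vd a (LH c) (E1, {x}) * g (D + underived M - E1) \<noteq> 0"
    then have "vd a (LH c) (E1, {x}) \<noteq> 0" by simp
    from vd_LH_support[OF this] show "\<forall>v\<in>#E1. fst v = 0" ..
  qed
  also have "\<dots> = (\<Sum>M1 | M1 \<subseteq># M. vd a (LH c) (underived M1, {x}) * g (D + underived (M - M1)))"
  proof (rule sum.cong)
    fix M1 assume "M1 \<in> {M1. M1 \<subseteq># M}"
    then have "D + underived M - underived M1 = D + underived (M - M1)"
      by (simp add: image_mset_Diff image_mset_subseteq_mono subset_mset.add_diff_assoc)
    then show "vd a (LH c) (underived M1, {x}) * g (D + underived M - underived M1)
        = vd a (LH c) (underived M1, {x}) * g (D + underived (M - M1))"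
      by simp
  qed simp
  finally show ?thesis .
qed

lemma smul_vd_LH_drho:
  assumes "fst u = 0" and "fst w = 1"
  shows "smul (vd a (LH c)) (dz (vd b (LH c))) (underived M, {u, w})
    = mconv (dcorr c {#snd u, (a, 0)#}) (dcorr c {#snd w, (b, 0)#}) M"
proof -
  let ?A = "vd a (LH c)" and ?B = "dz (vd b (LH c))"
  have "?A (E1, {w}) = 0" for E1
    using assms(2) vd_LH_nonzero by fastforce
  moreover have "u \<noteq> w" "{u, w} - {u} = {w}" "ksign {u} {w} = 1"
    using assms vless_asym[OF vless_if_fst_less, of u w] by (auto simp: ksign_singleton)
  ultimately have "smul ?A ?B (underived M, {u, w})
      = (\<Sum>E1 | E1 \<subseteq># {#} + underived M. ?A (E1, {u}) * ?B ({#} + underived M - E1, {w}))"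
    by (simp add: smul_singleton_left[OF _ vd_LH_card_one])
  also have "\<dots> = (\<Sum>M1 | M1 \<subseteq># M. ?A (underived M1, {u}) * ?B ({#} + underived (M - M1), {w}))"
    by (rule sum_vd_LH_submultisets) simp
  also have "\<dots> = mconv (dcorr c {#snd u, (a, 0)#}) (dcorr c {#snd w, (b, 0)#}) M"
    using assms by (simp add: mconv_def vd_LH_underived dz_vd_LH_drho)
  finally show ?thesis .
qed

lemma smul_vd_LH_dlam:
  assumes "u \<noteq> w" and "fst u = 0" and "fst w = 0"
  shows "smul (vd a (LH c)) (dz (vd b (LH c))) (add_mset (1, z) (underived M), {u, w})
    = ksign {u} {w} * mconv (dcorr c {#snd u, (a, 0)#}) (dcorr c {#snd w, (b, 0), z#}) M
    + ksign {w} {u} * mconv (dcorr c {#snd w, (a, 0)#}) (dcorr c {#snd u, (b, 0), z#}) M"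
proof -
  let ?A = "vd a (LH c)" and ?B = "dz (vd b (LH c))" and ?E = "{#(1, z)#} + underived M"
  have summand: "(\<Sum>E1 | E1 \<subseteq># ?E. ?A (E1, {x}) * ?B (?E - E1, {y}))
      = mconv (dcorr c {#snd x, (a, 0)#}) (dcorr c {#snd y, (b, 0), z#}) M"
    if "fst x = 0" and "fst y = 0" for x y
  proof -
    have "(\<Sum>E1 | E1 \<subseteq># ?E. ?A (E1, {x}) * ?B (?E - E1, {y}))
        = (\<Sum>M1 | M1 \<subseteq># M. ?A (underived M1, {x}) * ?B ({#(1, z)#} + underived (M - M1), {y}))"
      by (rule sum_vd_LH_submultisets) simp
    also have "\<dots> = (\<Sum>M1 | M1 \<subseteq># M. dcorr c {#snd x, (a, 0)#} M1 * dcorr c {#snd y, (b, 0), z#} (M - M1))"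
    proof (rule sum.cong)
      fix M1
      have "?B ({#(1, z)#} + underived (M - M1), {y}) = ?B (add_mset (1, z) (underived (M - M1)), {y})"
        by simp
      then show "?A (underived M1, {x}) * ?B ({#(1, z)#} + underived (M - M1), {y})
          = dcorr c {#snd x, (a, 0)#} M1 * dcorr c {#snd y, (b, 0), z#} (M - M1)"
        using that by (simp only: vd_LH_underived dz_vd_LH_dlam simp_thms if_True)
    qed simp
    finally show ?thesis
      unfolding mconv_def .
  qed
  have "{u, w} - {u} = {w}" "{u, w} - {w} = {u}"
    using assms(1) by auto
  then have "smul ?A ?B (?E, {u, w})
      = ksign {u} {w} * (\<Sum>E1 | E1 \<subseteq># ?E. ?A (E1, {u}) * ?B (?E - E1, {w}))
      + ksign {w} {u} * (\<Sum>E1 | E1 \<subseteq># ?E. ?A (E1, {w}) * ?B (?E - E1, {u}))"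
    using assms(1) by (simp add: smul_singleton_left[OF _ vd_LH_card_one])
  moreover have "add_mset (1, z) (underived M) = ?E"
    by simp
  ultimately show ?thesis
    using summand[OF assms(2,3)] summand[OF assms(3,2)] by simp
qed

lemma smul_vd_LH_nonzero:
  assumes "smul (vd a (LH c)) (dz (vd b (LH c))) (E, Q) \<noteq> 0"
  shows "drho_mono E Q \<or> dlam_mono E Q"
proof -
  obtain E1 Q1 where sub: "E1 \<subseteq># E" "Q1 \<subseteq> Q" and nz1: "vd a (LH c) (E1, Q1) \<noteq> 0"
    and nz2: "dz (vd b (LH c)) (E - E1, Q - Q1) \<noteq> 0"
    using smul_nonzero[OF assms] by blast
  from vd_LH_nonzero[OF nz1] obtain M1 u where E1: "E1 = underived M1" and Q1: "Q1 = {u}"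
    and u: "fst u = 0"
    by blast
  have E: "E = E1 + (E - E1)" and Q: "Q = insert u (Q - Q1)"
    using sub Q1 by auto
  from dz_vd_LH_nonzero[OF nz2] show ?thesis
  proof (elim disjE exE conjE)
    fix M2 w
    assume "E - E1 = underived M2" "Q - Q1 = {w}" "fst w = 1"
    with E Q E1 u have "E = underived (M1 + M2)" "Q = {u, w}" "fst u = 0" "fst w = 1"
      by simp_all
    then show ?thesis
      using drho_monoI by blast
  next
    fix M2 z u'
    assume "E - E1 = add_mset (1, z) (underived M2)" "Q - Q1 = {u'}" "fst u' = 0"
    with E Q E1 Q1 u have "E = add_mset (1, z) (underived (M1 + M2))" "Q = {u, u'}" "u \<noteq> u'"
      by auto
    with u \<open>fst u' = 0\<close> show ?thesis
      using dlam_monoI by blast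
  qed
qed

lemma br_LH_drho:
  assumes "\<forall>X. size X < 3 \<longrightarrow> c X = 0" and "genus0_TRR c p" and "invertible (gmat c p)"
    and "fst u = 0" and "fst w = 1"
  shows "br c p (LH c) (LH c) (underived M, {u, w})
    = dcorr c {#desc_succ (snd u), snd w#} M + dcorr c {#snd u, desc_succ (snd w)#} M"
  using assms by (simp add: br_def smul_vd_LH_drho genus0_two_point ginv_conv_def[symmetric])

lemma br_LH_dlam:
  assumes "genus0_TRR c p" and "invertible (gmat c p)"
    and "u \<noteq> w" and "fst u = 0" and "fst w = 0"
  shows "br c p (LH c) (LH c) (add_mset (1, z) (underived M), {u, w}) = ksign {u} {w} *
    (dcorr c {#desc_succ (snd u), snd w, z#} M - dcorr c {#desc_succ (snd w), snd u, z#} M)"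
proof -
  let ?F = "\<lambda>x a. dcorr c {#snd x, (a, 0)#}" and ?G = "\<lambda>x b. dcorr c {#snd x, (b, 0), z#}"
  have "br c p (LH c) (LH c) (add_mset (1, z) (underived M), {u, w}) = (\<Sum>a\<in>UNIV. \<Sum>b\<in>UNIV. ginv c p a b *
      (ksign {u} {w} * mconv (?F u a) (?G w b) M + ksign {w} {u} * mconv (?F w a) (?G u b) M))"
    by (simp only: br_def smul_vd_LH_dlam[OF assms(3-5)])
  also have "\<dots> = ksign {u} {w} * ginv_conv c p (?F u) (?G w) M + ksign {w} {u} * ginv_conv c p (?F w) (?G u) M"
    by (simp add: ginv_conv_def distrib_left sum.distrib sum_distrib_left mult_ac)
  finally show ?thesis
    using assms by (simp add: genus0_TRR_ginv_conv[symmetric] ksign_singleton_swap[OF assms(3)] right_diff_distrib)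
qed

lemma br_LH_nonzero:
  assumes "br c p (LH c) (LH c) (E, Q) \<noteq> 0"
  shows "drho_mono E Q \<or> dlam_mono E Q"
proof -
  from assms obtain a b where "smul (vd a (LH c)) (dz (vd b (LH c))) (E, Q) \<noteq> 0"
    unfolding br_def by (auto elim!: sum.not_neutral_contains_not_neutral)
  then show ?thesis
    by (rule smul_vd_LH_nonzero)
qed

section \<open>The primitive of the Maurer-Cartan expression\<close>

(* Coefficients of N = 1/2 sum rho_x rho_y <<O_x^+ O_y>>_0: the ordered monomial rho_u rho_w
   collects both orders of the odd factors, whence ksign. *)
definition mc_primitive :: "'i::linorder corr \<Rightarrow> 'i ser" where
  "mc_primitive c N =
    (if (\<forall>v\<in>#fst N. fst v = 0) \<and> (\<forall>v\<in>snd N. fst v = 0) \<and> card (snd N) = 2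
     then 1/2 * (\<Sum>u\<in>snd N. \<Sum>w\<in>snd N - {u}.
       ksign {u} {w} * dcorr c {#desc_succ (snd u), snd w#} (image_mset snd (fst N)))
     else 0)"

lemma mc_primitive_underived:
  assumes "u \<noteq> w" and "fst u = 0" and "fst w = 0"
  shows "mc_primitive c (underived M, {u, w}) = 1/2 * ksign {u} {w} *
    (dcorr c {#desc_succ (snd u), snd w#} M - dcorr c {#desc_succ (snd w), snd u#} M)"
proof -
  have "{u, w} - {u} = {w}" "{u, w} - {w} = {u}" "card {u, w} = 2"
    using assms(1) by auto
  with assms have "mc_primitive c (underived M, {u, w}) = 1/2 *
      (ksign {u} {w} * dcorr c {#desc_succ (snd u), snd w#} M
       + ksign {w} {u} * dcorr c {#desc_succ (snd w), snd u#} M)"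
    by (simp add: mc_primitive_def)
  then show ?thesis
    by (simp add: ksign_singleton_swap[OF assms(1)] algebra_simps)
qed

lemma mc_primitive_nonzero:
  assumes "mc_primitive c (E, Q) \<noteq> 0"
  shows "\<exists>M u w. E = underived M \<and> Q = {u, w} \<and> u \<noteq> w \<and> fst u = 0 \<and> fst w = 0"
proof -
  from assms have E: "\<forall>v\<in>#E. fst v = 0" and Q: "\<forall>v\<in>Q. fst v = 0" and "card Q = 2"
    by (auto simp: mc_primitive_def split: if_splits)
  then obtain u w where uw: "Q = {u, w}" "u \<noteq> w"
    by (auto simp: card_2_iff)
  moreover from Q uw(1) have "fst u = 0" "fst w = 0"
    by simp_all
  moreover have "E = underived (image_mset snd E)"
    using underived_image_snd[OF E] by simp
  ultimately show ?thesis
    by blast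
qed

lemma mc_primitive_support:
  "mc_primitive c (E, Q) \<noteq> 0 \<Longrightarrow> (\<forall>v\<in>#E. fst v = 0) \<and> (\<forall>v\<in>Q. fst v = 0)"
  by (auto simp: mc_primitive_def split: if_splits)

lemma dz_mc_primitive_drho:
  assumes "fst u = 0" and "fst w = 1"
  shows "dz (mc_primitive c) (underived M, {u, w}) = 1/2 *
    (dcorr c {#desc_succ (snd u), snd w#} M - dcorr c {#desc_succ (snd w), snd u#} M)"
proof -
  let ?v = "(0, snd w)"
  have "dz (mc_primitive c) (underived M, {u, w}) = ksign {w} {u} * po ?v (mc_primitive c) (underived M, {u})"
    using dz_coeff_drho[of "{u}" w "mc_primitive c" M] assms by (simp add: insert_commute)
  moreover have "ksign {w} {u} = -1"
    using assms by (simp add: ksign_singleton vless_if_fst_less)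
  moreover have "po ?v (mc_primitive c) (underived M, {u}) = 1/2 *
    (dcorr c {#desc_succ (snd w), snd u#} M - dcorr c {#desc_succ (snd u), snd w#} M)"
  proof (cases "?v = u")
    case True
    then show ?thesis by (auto simp: po_def)
  next
    case False
    then have "po ?v (mc_primitive c) (underived M, {u})
        = ksign {?v} {u} * mc_primitive c (underived M, {?v, u})"
      by (simp add: po_def)
    also have "\<dots> = (ksign {?v} {u} * ksign {?v} {u}) * (1/2 *
        (dcorr c {#desc_succ (snd w), snd u#} M - dcorr c {#desc_succ (snd u), snd w#} M))"
      using False assms(1) by (simp add: mc_primitive_underived)
    finally show ?thesis
      by (simp add: ksign_singleton)
  qed
  ultimately show ?thesis
    by (simp add: algebra_simps)
qed

lemma dz_mc_primitive_dlam:
  assumes "u \<noteq> w" and "fst u = 0" and "fst w = 0"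
  shows "dz (mc_primitive c) (add_mset (1, z) (underived M), {u, w}) = 1/2 * ksign {u} {w} *
    (dcorr c {#desc_succ (snd u), snd w, z#} M - dcorr c {#desc_succ (snd w), snd u, z#} M)"
proof -
  have "dz (mc_primitive c) (add_mset (1, z) (underived M), {u, w})
      = mderiv z (\<lambda>M. mc_primitive c (underived M, {u, w})) M"
    by (rule dz_coeff_dlam) (use assms in auto)
  also have "\<dots> = 1/2 * ksign {u} {w} *
      (mderiv z (dcorr c {#desc_succ (snd u), snd w#}) M - mderiv z (dcorr c {#desc_succ (snd w), snd u#}) M)"
    by (simp only: mc_primitive_underived[OF assms] mderiv_cmult mderiv_diff)
  finally show ?thesis
    by (simp add: mderiv_dcorr add_mset_commute)
qed

lemma dz_mc_primitive_nonzero: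
  assumes "dz (mc_primitive c) (E, Q) \<noteq> 0"
  shows "drho_mono E Q \<or> dlam_mono E Q"
proof (rule dz_nonzero_cases[OF assms mc_primitive_support])
  fix M z
  assume E: "E = add_mset (1, z) (underived M)"
    and nz: "mc_primitive c (add_mset (0, z) (underived M), Q) \<noteq> 0"
  from mc_primitive_nonzero[OF nz] obtain u w where Q: "Q = {u, w}" and "u \<noteq> w" "fst u = 0" "fst w = 0"
    by blast
  from this(2-4) have "dlam_mono E Q"
    unfolding E Q by (rule dlam_monoI)
  then show ?thesis ..
next
  fix w Q'
  assume Q: "Q = insert w Q'" and w: "fst w = 1" and new: "(0, snd w) \<notin> Q'"
    and nz: "mc_primitive c (E, insert (0, snd w) Q') \<noteq> 0"
  from mc_primitive_nonzero[OF nz] obtain M u u' where E: "E = underived M"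
    and ins: "insert (0, snd w) Q' = {u, u'}" and "u \<noteq> u'" and fst0: "fst u = 0" "fst u' = 0"
    by blast
  from ins new \<open>u \<noteq> u'\<close> obtain x where "x \<in> {u, u'}" and Q'x: "Q' = {x}"
    by (rule insert_eq_doubletonE)
  with fst0 have "fst x = 0"
    by auto
  moreover have "Q = {x, w}"
    unfolding Q Q'x by (rule insert_commute)
  ultimately have "drho_mono E Q"
    unfolding E using w by (simp add: drho_monoI)
  then show ?thesis ..
qed

lemma mc_equation_drho:
  assumes "\<forall>X. size X < 3 \<longrightarrow> c X = 0" and "genus0_TRR c p" and "invertible (gmat c p)"
    and "fst u = 0" and "fst w = 1"
  shows "dz (mc_primitive c) (underived M, {u, w})
    = delta (LH c) (underived M, {u, w}) + 1/2 * br c p (LH c) (LH c) (underived M, {u, w})"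
proof -
  have "dcorr c {#desc_succ (snd w), snd u#} M = dcorr c {#snd u, desc_succ (snd w)#} M"
    by (simp add: add_mset_commute)
  then show ?thesis
    unfolding dz_mc_primitive_drho[OF assms(4,5)] delta_LH_drho[OF assms(4,5)] br_LH_drho[OF assms]
    by (simp add: algebra_simps)
qed

lemma mc_equation_dlam:
  assumes "genus0_TRR c p" and "invertible (gmat c p)"
    and "u \<noteq> w" and "fst u = 0" and "fst w = 0"
  shows "dz (mc_primitive c) (add_mset (1, z) (underived M), {u, w})
    = delta (LH c) (add_mset (1, z) (underived M), {u, w})
      + 1/2 * br c p (LH c) (LH c) (add_mset (1, z) (underived M), {u, w})"
proof -
  have "delta (LH c) (add_mset (1, z) (underived M), {u, w}) = 0"
    using delta_LH_nonzero not_drho_mono_dlam by blast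
  then show ?thesis
    using dz_mc_primitive_dlam[OF assms(3-5)] br_LH_dlam[OF assms] by simp
qed

lemma mc_equation:
  assumes "\<forall>X. size X < 3 \<longrightarrow> c X = 0" and "genus0_TRR c p" and "invertible (gmat c p)"
  shows "dz (mc_primitive c) (E, Q) = delta (LH c) (E, Q) + 1/2 * br c p (LH c) (LH c) (E, Q)"
proof -
  consider (drho) "drho_mono E Q" | (dlam) "dlam_mono E Q" | (other) "\<not> drho_mono E Q" "\<not> dlam_mono E Q"
    by blast
  then show ?thesis
  proof cases
    case drho
    then obtain M u w where "E = underived M" "Q = {u, w}" and uw: "fst u = 0" "fst w = 1"
      unfolding drho_mono_def by blast
    then show ?thesis
      using mc_equation_drho[OF assms uw] by simp
  next
    case dlam
    then obtain M z u w where E: "E = add_mset (1, z) (underived M)" and Q: "Q = {u, w}"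
      and uw: "u \<noteq> w" "fst u = 0" "fst w = 0"
      unfolding dlam_mono_def by blast
    show ?thesis
      unfolding E Q by (rule mc_equation_dlam[OF assms(2,3) uw])
  next
    case other
    then have "dz (mc_primitive c) (E, Q) = 0" "delta (LH c) (E, Q) = 0"
      "br c p (LH c) (LH c) (E, Q) = 0"
      using dz_mc_primitive_nonzero delta_LH_nonzero br_LH_nonzero by blast+
    then show ?thesis
      by simp
  qed
qed

theorem mainTheorem7:
  fixes c :: "('i::{finite,linorder} \<times> nat) multiset \<Rightarrow> complex" and p :: 'i
  assumes vanish: "\<forall>X. size X < 3 \<longrightarrow> c X = 0"
    and nondeg: "invertible (gmat c p)"
    and TRR: "\<forall>a b d i j k M.
      dcorr c {#(a, Suc i), (b, j), (d, k)#} M =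
      (\<Sum>s\<in>UNIV. \<Sum>t\<in>UNIV. ginv c p s t *
         (\<Sum>M1\<in>{M1. M1 \<subseteq># M}. dcorr c {#(a, i), (t, 0)#} M1 * dcorr c {#(s, 0), (b, j), (d, k)#} (M - M1)))"
  shows "\<exists>N. dz N = (\<lambda>x. delta (LH c) x + 1/2 * br c p (LH c) (LH c) x)"
proof (intro exI ext)
  have "genus0_TRR c p"
    using TRR unfolding genus0_TRR_def mconv_def .
  then show "dz (mc_primitive c) N = delta (LH c) N + 1/2 * br c p (LH c) (LH c) N" for N
    using mc_equation[OF vanish _ nondeg] by (cases N) simp
qed

end
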